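(* Let $G$ be a profinite group and $k$ an algebraically closed field (with the discrete topology). Let $V$ and $W$ be irreducible smooth representations of $G$ over $k$ and $\chi$ a one-dimensional smooth character of $G$ over $k$. Then $\chi^{\oplus2}$ is not a subrepresentation of $V\otimes W$. *)

theory Defs
  imports "HOL-Analysis.Analysis" "HOL-Algebra.Group" "HOL-Computational_Algebra.Polynomial"
begin

definition alg_closed :: "'k::field itself \<Rightarrow> bool" where
  "alg_closed _ \<longleftrightarrow> (\<forall>p :: 'k poly. degree p > 0 \<longrightarrow> (\<exists>x. poly p x = 0))"

definition topological_group_on :: "('g, 'b) monoid_scheme \<Rightarrow> 'g topology \<Rightarrow> bool" where
  "topological_group_on G T \<longleftrightarrow> group G \<and> topspace T = carrier G \<and>
     continuous_map (prod_topology T T) T (\<lambda>(x, y). x \<otimes>\<^bsub>G\<^esub> y) \<and>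
     continuous_map T T (\<lambda>x. inv\<^bsub>G\<^esub> x)"

definition profinite_group :: "('g, 'b) monoid_scheme \<Rightarrow> 'g topology \<Rightarrow> bool" where
  "profinite_group G T \<longleftrightarrow> topological_group_on G T \<and> compact_space T \<and> Hausdorff_space T \<and>
     (\<forall>x\<in>topspace T. connected_component_of_set T x = {x})"

definition representation ::
  "('g, 'b) monoid_scheme \<Rightarrow> ('k::field \<Rightarrow> 'v::ab_group_add \<Rightarrow> 'v) \<Rightarrow> ('g \<Rightarrow> 'v \<Rightarrow> 'v) \<Rightarrow> bool" where
  "representation G sV \<rho> \<longleftrightarrow> vector_space sV \<and>
     (\<forall>g\<in>carrier G. Vector_Spaces.linear sV sV (\<rho> g)) \<and>
     \<rho> \<one>\<^bsub>G\<^esub> = id \<and>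
     (\<forall>g\<in>carrier G. \<forall>h\<in>carrier G. \<rho> (g \<otimes>\<^bsub>G\<^esub> h) = \<rho> g \<circ> \<rho> h)"

definition smooth_rep ::
  "('g, 'b) monoid_scheme \<Rightarrow> 'g topology \<Rightarrow> ('k::field \<Rightarrow> 'v::ab_group_add \<Rightarrow> 'v) \<Rightarrow> ('g \<Rightarrow> 'v \<Rightarrow> 'v) \<Rightarrow> bool" where
  "smooth_rep G T sV \<rho> \<longleftrightarrow> representation G sV \<rho> \<and>
     (\<forall>v. openin T {g \<in> carrier G. \<rho> g v = v})"

definition irreducible_rep ::
  "('g, 'b) monoid_scheme \<Rightarrow> ('k::field \<Rightarrow> 'v::ab_group_add \<Rightarrow> 'v) \<Rightarrow> ('g \<Rightarrow> 'v \<Rightarrow> 'v) \<Rightarrow> bool" where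
  "irreducible_rep G sV \<rho> \<longleftrightarrow> representation G sV \<rho> \<and> (\<exists>v::'v. v \<noteq> 0) \<and>
     (\<forall>S. module.subspace sV S \<and> (\<forall>g\<in>carrier G. \<forall>v\<in>S. \<rho> g v \<in> S) \<longrightarrow> S = {0} \<or> S = UNIV)"

(* Tensor product V \<otimes>_k W = (free k-vector space on V \<times> W) / (bilinearity relations).
   Elements of the free space: finitely supported functions V \<times> W \<Rightarrow> k. *)
definition tensor_free :: "('v \<times> 'w \<Rightarrow> 'k::field) \<Rightarrow> bool" where
  "tensor_free f \<longleftrightarrow> finite {x. f x \<noteq> 0}"

definition tdelta :: "'v \<times> 'w \<Rightarrow> 'v \<times> 'w \<Rightarrow> 'k::field" where
  "tdelta p = (\<lambda>x. if x = p then 1 else 0)"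

inductive_set tensor_rel ::
  "('k::field \<Rightarrow> 'v::ab_group_add \<Rightarrow> 'v) \<Rightarrow> ('k \<Rightarrow> 'w::ab_group_add \<Rightarrow> 'w) \<Rightarrow> ('v \<times> 'w \<Rightarrow> 'k) set"
  for sV sW where
  zero: "(\<lambda>_. 0) \<in> tensor_rel sV sW"
| addl: "(\<lambda>x. tdelta (v + v', w) x - tdelta (v, w) x - tdelta (v', w) x) \<in> tensor_rel sV sW"
| addr: "(\<lambda>x. tdelta (v, w + w') x - tdelta (v, w) x - tdelta (v, w') x) \<in> tensor_rel sV sW"
| scl: "(\<lambda>x. tdelta (sV c v, w) x - c * tdelta (v, w) x) \<in> tensor_rel sV sW"
| scr: "(\<lambda>x. tdelta (v, sW c w) x - c * tdelta (v, w) x) \<in> tensor_rel sV sW"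
| add: "f \<in> tensor_rel sV sW \<Longrightarrow> g \<in> tensor_rel sV sW \<Longrightarrow> (\<lambda>x. f x + g x) \<in> tensor_rel sV sW"
| smult: "f \<in> tensor_rel sV sW \<Longrightarrow> (\<lambda>x. c * f x) \<in> tensor_rel sV sW"

(* diagonal action on the free space: g \<cdot> \<delta>(v,w) = \<delta>(\<rho> g v, \<sigma> g w) *)
definition tensor_act ::
  "('g, 'b) monoid_scheme \<Rightarrow> ('g \<Rightarrow> 'v \<Rightarrow> 'v) \<Rightarrow> ('g \<Rightarrow> 'w \<Rightarrow> 'w) \<Rightarrow> 'g \<Rightarrow> ('v \<times> 'w \<Rightarrow> 'k) \<Rightarrow> ('v \<times> 'w \<Rightarrow> 'k)" where
  "tensor_act G \<rho> \<sigma> g f = (\<lambda>(x, y). f (\<rho> (inv\<^bsub>G\<^esub> g) x, \<sigma> (inv\<^bsub>G\<^esub> g) y))"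

(* chi\<oplus>chi is a subrepresentation of V \<otimes> W: there is an injective G-equivariant k-linear map
   k^2 (with action chi\<oplus>chi) \<rightarrow> V \<otimes> W; it is given by the images [t1], [t2] of the two
   standard basis vectors, (a,b) \<mapsto> a[t1] + b[t2]. *)
definition double_char_in_tensor ::
  "('g, 'b) monoid_scheme \<Rightarrow> ('k::field \<Rightarrow> 'v::ab_group_add \<Rightarrow> 'v) \<Rightarrow> ('g \<Rightarrow> 'v \<Rightarrow> 'v)
     \<Rightarrow> ('k \<Rightarrow> 'w::ab_group_add \<Rightarrow> 'w) \<Rightarrow> ('g \<Rightarrow> 'w \<Rightarrow> 'w) \<Rightarrow> ('g \<Rightarrow> 'k) \<Rightarrow> bool" where
  "double_char_in_tensor G sV \<rho> sW \<sigma> chi \<longleftrightarrow>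
     (\<exists>t1 t2 :: 'v \<times> 'w \<Rightarrow> 'k. tensor_free t1 \<and> tensor_free t2 \<and>
        (\<forall>g\<in>carrier G. (\<lambda>x. tensor_act G \<rho> \<sigma> g t1 x - chi g * t1 x) \<in> tensor_rel sV sW) \<and>
        (\<forall>g\<in>carrier G. (\<lambda>x. tensor_act G \<rho> \<sigma> g t2 x - chi g * t2 x) \<in> tensor_rel sV sW) \<and>
        (\<forall>a b. (\<lambda>x. a * t1 x + b * t2 x) \<in> tensor_rel sV sW \<longrightarrow> a = 0 \<and> b = 0))"

end

theory Submission
  imports Defs "Jordan_Normal_Form.Char_Poly"
begin

text \<open>
  A tensor \<open>t \<in> V \<otimes> W\<close> determines by contraction a linear map from the dual of \<open>V\<close> to \<open>W\<close>,
  and \<open>t = 0\<close> exactly when this map vanishes. If \<open>G\<close> acts on \<open>t\<close> through \<open>\<chi>\<close>, the map is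
  equivariant up to \<open>\<chi>\<close>: the common zero set of its kernel is a \<open>G\<close>-invariant subspace of \<open>V\<close>
  and its image is a \<open>G\<close>-invariant subspace of \<open>W\<close>. By irreducibility, for \<open>t \<noteq> 0\<close> no nonzero
  functional lies in the kernel and the image is all of \<open>W\<close>.

  Given two such tensors \<open>t\<^sub>1 \<noteq> 0\<close> and \<open>t\<^sub>2\<close>, surjectivity for \<open>t\<^sub>1\<close> expresses the
  coordinates of \<open>t\<^sub>2\<close> (with respect to a finite basis of the first factors occurring in
  \<open>t\<^sub>1\<close>, \<open>t\<^sub>2\<close>) as a square matrix applied to those of \<open>t\<^sub>1\<close>. Over the algebraically closed
  field this matrix has an eigenvector, which yields a nonzero functional killed by contraction
  with \<open>t\<^sub>2 - c t\<^sub>1\<close>; hence \<open>t\<^sub>2 = c t\<^sub>1\<close> in \<open>V \<otimes> W\<close>.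
\<close>

section \<open>Linear algebra\<close>

lemma linear_map_0: "Vector_Spaces.linear s1 s2 f \<Longrightarrow> f 0 = 0"
  unfolding linear_iff_module_hom by (rule module_hom.zero)

lemma linear_map_add: "Vector_Spaces.linear s1 s2 f \<Longrightarrow> f (x + y) = f x + f y"
  unfolding Vector_Spaces.linear_iff by blast

lemma linear_map_scale: "Vector_Spaces.linear s1 s2 f \<Longrightarrow> f (s1 c x) = s2 c (f x)"
  unfolding Vector_Spaces.linear_iff by blast

lemma linear_map_sum: "Vector_Spaces.linear s1 s2 f \<Longrightarrow> f (\<Sum>i\<in>I. x i) = (\<Sum>i\<in>I. f (x i))"
  unfolding linear_iff_module_hom by (rule module_hom.sum)

lemma alg_closed_left_eigenvector:
  fixes M :: "'a \<Rightarrow> 'a \<Rightarrow> 'k::field"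
  assumes "alg_closed TYPE('k)" and "finite E" and "E \<noteq> {}"
  obtains a c where "\<exists>e\<in>E. a e \<noteq> 0" and "\<And>e. e \<in> E \<Longrightarrow> (\<Sum>e'\<in>E. a e' * M e' e) = c * a e"
proof -
  define n where "n = card E"
  obtain f where f: "bij_betw f {0..<n} E"
    using ex_bij_betw_nat_finite[OF \<open>finite E\<close>] unfolding n_def by blast
  have "n > 0" using assms(2,3) by (simp add: n_def card_gt_0_iff)
  \<comment> \<open>the transpose of \<open>M\<close>, so that its eigenvectors are left eigenvectors of \<open>M\<close>\<close>
  define A :: "'k mat" where "A = mat n n (\<lambda>(i, j). M (f j) (f i))"
  have A: "A \<in> carrier_mat n n" by (simp add: A_def)
  have "degree (char_poly A) = n" using degree_monic_char_poly[OF A] by simp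
  then obtain c where "poly (char_poly A) c = 0"
    using assms(1) \<open>n > 0\<close> unfolding alg_closed_def by auto
  then have "eigenvalue A c" using eigenvalue_root_char_poly[OF A] by simp
  then obtain v where "eigenvector A v c" unfolding eigenvalue_def by blast
  then have v: "v \<in> carrier_vec n" "v \<noteq> 0\<^sub>v n" "A *\<^sub>v v = c \<cdot>\<^sub>v v"
    using A unfolding eigenvector_def by auto
  define a where "a e = v $ the_inv_into {0..<n} f e" for e
  have a_f: "a (f i) = v $ i" if "i < n" for i
    using the_inv_into_f_f[OF bij_betw_imp_inj_on[OF f]] that by (simp add: a_def)
  have "\<exists>e\<in>E. a e \<noteq> 0"
  proof (rule ccontr)
    assume "\<not> ?thesis"
    then have "\<forall>i<n. v $ i = 0" using a_f f bij_betwE by fastforce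
    then have "v = 0\<^sub>v n" using v(1) by (intro eq_vecI) auto
    then show False using v(2) by simp
  qed
  moreover have "(\<Sum>e'\<in>E. a e' * M e' e) = c * a e" if "e \<in> E" for e
  proof -
    obtain i where i: "i < n" "e = f i" using f \<open>e \<in> E\<close> by (auto simp: bij_betw_def)
    have "(\<Sum>e'\<in>E. a e' * M e' e) = (\<Sum>j\<in>{0..<n}. v $ j * M (f j) (f i))"
      using sum.reindex_bij_betw[OF f, of "\<lambda>e'. a e' * M e' e"] by (simp add: a_f i)
    also have "\<dots> = (A *\<^sub>v v) $ i"
      using i v(1) by (auto simp: A_def scalar_prod_def mult.commute intro: sum.cong)
    also have "\<dots> = c * a e" using v i a_f by simp
    finally show ?thesis .
  qed
  ultimately show thesis using that by blast
qed

definition coordinate_functionals ::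
    "('a::field \<Rightarrow> 'b::ab_group_add \<Rightarrow> 'b) \<Rightarrow> 'b set \<Rightarrow> ('b \<Rightarrow> 'b \<Rightarrow> 'a) \<Rightarrow> bool" where
  "coordinate_functionals s E \<delta> \<longleftrightarrow>
     (\<forall>e\<in>E. Vector_Spaces.linear s (*) (\<delta> e)) \<and>
     (\<forall>e\<in>E. \<forall>e'\<in>E. \<delta> e e' = (if e = e' then 1 else 0))"

context vector_space
begin

lemma linear_functional_extend:
  assumes "independent B"
  shows "\<exists>l. Vector_Spaces.linear scale (*) l \<and> (\<forall>x\<in>B. l x = f x)"
proof -
  interpret dual: vector_space_pair scale "(*) :: 'a \<Rightarrow> 'a \<Rightarrow> 'a"
    by (intro vector_space_pair.intro vector_space_axioms vector_space_over_itself.vector_space_axioms)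
  show ?thesis by (rule dual.linear_independent_extend[OF assms])
qed

lemma linear_functional_lincomb:
  assumes "\<And>i. i \<in> I \<Longrightarrow> Vector_Spaces.linear scale (*) (l i)"
  shows "Vector_Spaces.linear scale (*) (\<lambda>x. \<Sum>i\<in>I. c i * l i x)"
proof -
  interpret dual: vector_space_pair scale "(*) :: 'a \<Rightarrow> 'a \<Rightarrow> 'a"
    by (intro vector_space_pair.intro vector_space_axioms vector_space_over_itself.vector_space_axioms)
  show ?thesis
    using assms vector_space_axioms vector_space_over_itself.vector_space_axioms
    by (intro dual.module_hom_sum dual.module_hom_scale) (auto simp: module_iff_vector_space)
qed

lemma coordinate_functionals_exist:
  assumes "finite X"
  obtains E \<delta> where "finite E" and "X \<subseteq> span E" and "coordinate_functionals scale E \<delta>"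
proof -
  obtain E where E: "E \<subseteq> X" "independent E" "X \<subseteq> span E"
    by (rule maximal_independent_subset)
  have "\<exists>l. Vector_Spaces.linear scale (*) l \<and> (\<forall>e'\<in>E. l e' = (if e = e' then 1 else 0))" for e
    by (rule linear_functional_extend[OF E(2)])
  then obtain \<delta> where "\<forall>e. Vector_Spaces.linear scale (*) (\<delta> e) \<and>
      (\<forall>e'\<in>E. \<delta> e e' = (if e = e' then 1 else 0))"
    by metis
  then have "coordinate_functionals scale E \<delta>" by (simp add: coordinate_functionals_def)
  moreover have "finite E" using E(1) assms finite_subset by blast
  ultimately show thesis using that E(3) by blast
qed

lemma coordinate_functional_lincomb:
  assumes "finite E" and "coordinate_functionals scale E \<delta>" and "e \<in> E"
  shows "\<delta> e (\<Sum>e'\<in>E. scale (u e') e') = u e"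
proof -
  have lin: "Vector_Spaces.linear scale (*) (\<delta> e)"
    using assms(2,3) by (simp add: coordinate_functionals_def)
  have "\<delta> e (\<Sum>e'\<in>E. scale (u e') e') = (\<Sum>e'\<in>E. if e' = e then u e else 0)"
    using assms(2,3)
    by (auto simp: linear_map_sum[OF lin] linear_map_scale[OF lin] coordinate_functionals_def
        intro: sum.cong)
  then show ?thesis using assms(1,3) by simp
qed

lemma coordinate_expansion:
  assumes "finite E" and "coordinate_functionals scale E \<delta>" and "x \<in> span E"
  shows "x = (\<Sum>e\<in>E. scale (\<delta> e x) e)"
proof -
  obtain u where x: "x = (\<Sum>e\<in>E. scale (u e) e)"
    using span_finite[OF assms(1)] assms(3) by auto
  also have "\<dots> = (\<Sum>e\<in>E. scale (\<delta> e x) e)"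
    unfolding x using coordinate_functional_lincomb[OF assms(1,2)] by (intro sum.cong) simp_all
  finally show ?thesis .
qed

lemma linear_functional_expansion:
  assumes "finite E" and "coordinate_functionals scale E \<delta>" and "x \<in> span E"
    and "Vector_Spaces.linear scale (*) l"
  shows "l x = (\<Sum>e\<in>E. \<delta> e x * l e)"
  by (subst coordinate_expansion[OF assms(1-3)])
    (simp add: linear_map_sum[OF assms(4)] linear_map_scale[OF assms(4)])

lemma alg_closed_eigen_combination:
  assumes "alg_closed TYPE('a)" and "finite E" and "E \<noteq> {}"
    and y: "\<And>e'. e' \<in> E \<Longrightarrow> y e' = (\<Sum>e\<in>E. scale (M e' e) (x e))"
  obtains a c where "\<exists>e\<in>E. a e \<noteq> 0" and "(\<Sum>e\<in>E. scale (a e) (y e - scale c (x e))) = 0"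
proof -
  obtain a c where a: "\<exists>e\<in>E. a e \<noteq> 0"
    and eigen: "\<And>e. e \<in> E \<Longrightarrow> (\<Sum>e'\<in>E. a e' * M e' e) = c * a e"
    using alg_closed_left_eigenvector[OF assms(1-3), where M = M] by blast
  have "(\<Sum>e'\<in>E. scale (a e') (y e')) = (\<Sum>e'\<in>E. \<Sum>e\<in>E. scale (a e' * M e' e) (x e))"
    by (simp add: y scale_sum_right)
  also have "\<dots> = (\<Sum>e\<in>E. scale (\<Sum>e'\<in>E. a e' * M e' e) (x e))"
    by (subst sum.swap) (simp add: scale_sum_left)
  also have "\<dots> = (\<Sum>e\<in>E. scale (a e) (scale c (x e)))"
    by (intro sum.cong) (simp_all add: eigen mult.commute)
  finally have "(\<Sum>e\<in>E. scale (a e) (y e - scale c (x e))) = 0"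
    by (simp add: scale_right_diff_distrib sum_subtractf)
  with a show thesis using that by blast
qed

end

section \<open>The tensor product and contraction\<close>

definition supp :: "('a \<Rightarrow> 'k::zero) \<Rightarrow> 'a set" where
  "supp f = {p. f p \<noteq> 0}"

lemma tensor_free_iff_finite_supp: "tensor_free f \<longleftrightarrow> finite (supp f)"
  by (simp add: tensor_free_def supp_def)

lemma tensor_free_0 [simp]: "tensor_free (\<lambda>_. 0)"
  by (simp add: tensor_free_def)

lemma tensor_free_tdelta [simp]: "tensor_free (tdelta p)"
  unfolding tensor_free_def by (rule finite_subset[of _ "{p}"]) (auto simp: tdelta_def)

lemma tensor_free_add [simp]: "tensor_free f \<Longrightarrow> tensor_free g \<Longrightarrow> tensor_free (\<lambda>x. f x + g x)"
  unfolding tensor_free_def by (rule finite_subset[of _ "{x. f x \<noteq> 0} \<union> {x. g x \<noteq> 0}"]) auto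

lemma tensor_free_diff [simp]: "tensor_free f \<Longrightarrow> tensor_free g \<Longrightarrow> tensor_free (\<lambda>x. f x - g x)"
  unfolding tensor_free_def by (rule finite_subset[of _ "{x. f x \<noteq> 0} \<union> {x. g x \<noteq> 0}"]) auto

lemma tensor_free_mult [simp]: "tensor_free f \<Longrightarrow> tensor_free (\<lambda>x. c * f x)"
  unfolding tensor_free_def by (rule finite_subset[of _ "{x. f x \<noteq> 0}"]) auto

lemma tensor_rel_free: "f \<in> tensor_rel s1 s2 \<Longrightarrow> tensor_free f"
  by (induction rule: tensor_rel.induct) simp_all

lemma tensor_rel_uminus: "f \<in> tensor_rel s1 s2 \<Longrightarrow> (\<lambda>x. - f x) \<in> tensor_rel s1 s2"
  using tensor_rel.smult[of f s1 s2 "-1"] by simp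

lemma tensor_rel_sum:
  "(\<And>i. i \<in> I \<Longrightarrow> f i \<in> tensor_rel s1 s2) \<Longrightarrow> (\<lambda>x. \<Sum>i\<in>I. f i x) \<in> tensor_rel s1 s2"
proof (induction I rule: infinite_finite_induct)
  case (insert i I)
  then show ?case using tensor_rel.add[of "f i" s1 s2 "\<lambda>x. \<Sum>i\<in>I. f i x"] by simp
qed (simp_all add: tensor_rel.zero)

locale tensor_product = vs1: vector_space s1 + vs2: vector_space s2
  for s1 :: "'a::field \<Rightarrow> 'b::ab_group_add \<Rightarrow> 'b" (infixr \<open>*a\<close> 75)
  and s2 :: "'a \<Rightarrow> 'c::ab_group_add \<Rightarrow> 'c" (infixr \<open>*b\<close> 75)
begin

abbreviation R :: "('b \<times> 'c \<Rightarrow> 'a) set" where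
  "R \<equiv> tensor_rel s1 s2"

definition tensor_eq :: "('b \<times> 'c \<Rightarrow> 'a) \<Rightarrow> ('b \<times> 'c \<Rightarrow> 'a) \<Rightarrow> bool" where
  "tensor_eq f g \<longleftrightarrow> (\<lambda>x. f x - g x) \<in> R"

lemma tensor_eq_refl: "tensor_eq f f"
  by (simp add: tensor_eq_def tensor_rel.zero)

lemma tensor_eq_sym: "tensor_eq f g \<Longrightarrow> tensor_eq g f"
  unfolding tensor_eq_def by (drule tensor_rel_uminus) simp

lemma tensor_eq_trans [trans]: "tensor_eq f g \<Longrightarrow> tensor_eq g h \<Longrightarrow> tensor_eq f h"
  unfolding tensor_eq_def by (drule (1) tensor_rel.add) simp

lemma tensor_eq_0_iff: "tensor_eq f (\<lambda>_. 0) \<longleftrightarrow> f \<in> R"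
  by (simp add: tensor_eq_def)

lemma tensor_eq_mult: "tensor_eq f g \<Longrightarrow> tensor_eq (\<lambda>x. c * f x) (\<lambda>x. c * g x)"
  unfolding tensor_eq_def by (drule tensor_rel.smult[of _ s1 s2 c]) (simp add: algebra_simps)

lemma tensor_eq_sum:
  "(\<And>i. i \<in> I \<Longrightarrow> tensor_eq (f i) (g i)) \<Longrightarrow>
    tensor_eq (\<lambda>x. \<Sum>i\<in>I. f i x) (\<lambda>x. \<Sum>i\<in>I. g i x)"
  unfolding tensor_eq_def by (drule tensor_rel_sum) (simp add: sum_subtractf)

lemma tdelta_0_left: "tdelta (0, w) \<in> R"
  using tensor_rel_uminus[OF tensor_rel.addl[of 0 0 w s1 s2]] by simp

lemma tdelta_0_right: "tdelta (v, 0) \<in> R"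
  using tensor_rel_uminus[OF tensor_rel.addr[of v 0 0 s1 s2]] by simp

lemma tdelta_sum_left: "tensor_eq (tdelta (\<Sum>i\<in>I. v i, w)) (\<lambda>x. \<Sum>i\<in>I. tdelta (v i, w) x)"
proof (induction I rule: infinite_finite_induct)
  case (insert i I)
  have "tensor_eq (tdelta (v i + (\<Sum>i\<in>I. v i), w))
      (\<lambda>x. tdelta (v i, w) x + tdelta (\<Sum>i\<in>I. v i, w) x)"
    using tensor_rel.addl[of "v i" "\<Sum>i\<in>I. v i" w s1 s2]
    by (simp add: tensor_eq_def algebra_simps)
  also have "tensor_eq \<dots> (\<lambda>x. tdelta (v i, w) x + (\<Sum>i\<in>I. tdelta (v i, w) x))"
    using insert.IH tensor_rel.add[OF tensor_rel.zero] by (simp add: tensor_eq_def)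
  finally show ?case using insert by simp
qed (simp_all add: tensor_eq_def tdelta_0_left)

lemma tdelta_sum_right: "tensor_eq (tdelta (v, \<Sum>i\<in>I. w i)) (\<lambda>x. \<Sum>i\<in>I. tdelta (v, w i) x)"
proof (induction I rule: infinite_finite_induct)
  case (insert i I)
  have "tensor_eq (tdelta (v, w i + (\<Sum>i\<in>I. w i)))
      (\<lambda>x. tdelta (v, w i) x + tdelta (v, \<Sum>i\<in>I. w i) x)"
    using tensor_rel.addr[of v "w i" "\<Sum>i\<in>I. w i" s1 s2]
    by (simp add: tensor_eq_def algebra_simps)
  also have "tensor_eq \<dots> (\<lambda>x. tdelta (v, w i) x + (\<Sum>i\<in>I. tdelta (v, w i) x))"
    using insert.IH tensor_rel.add[OF tensor_rel.zero] by (simp add: tensor_eq_def)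
  finally show ?case using insert by simp
qed (simp_all add: tensor_eq_def tdelta_0_right)

lemma tdelta_scale_right: "tensor_eq (\<lambda>x. c * tdelta (v, w) x) (tdelta (v, c *b w))"
  using tensor_eq_sym[of "tdelta (v, c *b w)"] tensor_rel.scr[where v = v and c = c and w = w]
  by (simp add: tensor_eq_def)

lemma tdelta_scale_left: "tensor_eq (tdelta (c *a v, w)) (tdelta (v, c *b w))"
  using tensor_eq_trans[OF _ tdelta_scale_right] tensor_rel.scl[where v = v and c = c and w = w]
  by (simp add: tensor_eq_def)

text \<open>
  On representatives of \<open>V \<otimes> W\<close>, the canonical map \<open>V \<otimes> W \<rightarrow> Hom(V\<^sup>*, W)\<close>,
  \<open>v \<otimes> w \<mapsto> (l \<mapsto> l(v) w)\<close>.
\<close>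

definition contract :: "('b \<times> 'c \<Rightarrow> 'a) \<Rightarrow> ('b \<Rightarrow> 'a) \<Rightarrow> 'c" where
  "contract f l = (\<Sum>p\<in>supp f. (f p * l (fst p)) *b snd p)"

lemma contract_eq_sum:
  assumes "finite D" and "supp f \<subseteq> D"
  shows "contract f l = (\<Sum>p\<in>D. (f p * l (fst p)) *b snd p)"
  unfolding contract_def by (rule sum.mono_neutral_left) (use assms in \<open>auto simp: supp_def\<close>)

lemma contract_tdelta: "contract (tdelta p) l = l (fst p) *b snd p"
  by (subst contract_eq_sum[of "{p}"]) (auto simp: supp_def tdelta_def)

lemma contract_add:
  assumes "tensor_free f" and "tensor_free g"
  shows "contract (\<lambda>x. f x + g x) l = contract f l + contract g l"
proof -
  let ?D = "supp f \<union> supp g"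
  have "finite ?D" using assms by (simp add: tensor_free_iff_finite_supp)
  then have "contract (\<lambda>x. f x + g x) l = (\<Sum>p\<in>?D. ((f p + g p) * l (fst p)) *b snd p)"
    and "contract f l = (\<Sum>p\<in>?D. (f p * l (fst p)) *b snd p)"
    and "contract g l = (\<Sum>p\<in>?D. (g p * l (fst p)) *b snd p)"
    by (auto intro!: contract_eq_sum simp: supp_def)
  then show ?thesis by (simp add: distrib_right vs2.scale_left_distrib sum.distrib)
qed

lemma contract_diff:
  assumes "tensor_free f" and "tensor_free g"
  shows "contract (\<lambda>x. f x - g x) l = contract f l - contract g l"
proof -
  let ?D = "supp f \<union> supp g"
  have "finite ?D" using assms by (simp add: tensor_free_iff_finite_supp)
  then have "contract (\<lambda>x. f x - g x) l = (\<Sum>p\<in>?D. ((f p - g p) * l (fst p)) *b snd p)"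
    and "contract f l = (\<Sum>p\<in>?D. (f p * l (fst p)) *b snd p)"
    and "contract g l = (\<Sum>p\<in>?D. (g p * l (fst p)) *b snd p)"
    by (auto intro!: contract_eq_sum simp: supp_def)
  then show ?thesis by (simp add: left_diff_distrib vs2.scale_left_diff_distrib sum_subtractf)
qed

lemma contract_mult:
  assumes "tensor_free f"
  shows "contract (\<lambda>x. c * f x) l = c *b contract f l"
proof -
  have "finite (supp f)" using assms by (simp add: tensor_free_iff_finite_supp)
  then have "contract (\<lambda>x. c * f x) l = (\<Sum>p\<in>supp f. (c * f p * l (fst p)) *b snd p)"
    by (auto intro!: contract_eq_sum simp: supp_def)
  then show ?thesis by (simp add: contract_def vs2.scale_sum_right mult.assoc)
qed

lemma contract_add_functional: "contract f (\<lambda>v. l v + l' v) = contract f l + contract f l'"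
  by (simp add: contract_def distrib_left vs2.scale_left_distrib sum.distrib)

lemma contract_mult_functional: "contract f (\<lambda>v. c * l v) = c *b contract f l"
  by (simp add: contract_def vs2.scale_sum_right mult.left_commute)

lemma contract_image_subspace: "vs2.subspace {contract t l | l. Vector_Spaces.linear s1 (*) l}"
proof -
  interpret dual: vector_space_pair s1 "(*) :: 'a \<Rightarrow> 'a \<Rightarrow> 'a"
    by (intro vector_space_pair.intro vs1.vector_space_axioms
        vector_space_over_itself.vector_space_axioms)
  have "contract t (\<lambda>_. 0) = 0"
    by (simp add: contract_def)
  then show ?thesis
    unfolding vs2.subspace_def
    using dual.module_hom_zero dual.module_hom_add dual.module_hom_scale
    by (fastforce simp: contract_add_functional[symmetric] contract_mult_functional[symmetric])
qed

lemma contract_rel: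
  assumes "f \<in> R" and l: "Vector_Spaces.linear s1 (*) l"
  shows "contract f l = 0"
  using assms(1)
proof (induction rule: tensor_rel.induct)
  case zero
  show ?case by (simp add: contract_def supp_def)
next
  case (addl v v' w)
  then show ?case
    by (simp add: contract_diff contract_tdelta linear_map_add[OF l] vs2.scale_left_distrib)
next
  case (addr v w w')
  then show ?case by (simp add: contract_diff contract_tdelta vs2.scale_right_distrib)
next
  case (scl c v w)
  then show ?case by (simp add: contract_diff contract_mult contract_tdelta linear_map_scale[OF l])
next
  case (scr v c w)
  then show ?case by (simp add: contract_diff contract_mult contract_tdelta mult.commute)
next
  case (add f g)
  then show ?case by (simp add: contract_add tensor_rel_free)
next
  case (smult f c)
  then show ?case by (simp add: contract_mult tensor_rel_free)
qed

lemma contract_expansion: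
  assumes "tensor_free t" and E: "finite E" "coordinate_functionals s1 E \<delta>"
    and span: "fst ` supp t \<subseteq> vs1.span E" and l: "Vector_Spaces.linear s1 (*) l"
  shows "contract t l = (\<Sum>e\<in>E. l e *b contract t (\<delta> e))"
proof -
  have "contract t l = (\<Sum>p\<in>supp t. (t p * (\<Sum>e\<in>E. \<delta> e (fst p) * l e)) *b snd p)"
    unfolding contract_def using span
    by (intro sum.cong refl) (auto simp: vs1.linear_functional_expansion[OF E _ l])
  also have "\<dots> = (\<Sum>p\<in>supp t. \<Sum>e\<in>E. l e *b (t p * \<delta> e (fst p)) *b snd p)"
    by (simp add: sum_distrib_left vs2.scale_sum_left ac_simps)
  also have "\<dots> = (\<Sum>e\<in>E. l e *b contract t (\<delta> e))"
    by (subst sum.swap) (simp add: contract_def vs2.scale_sum_right)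
  finally show ?thesis .
qed

lemma tensor_normal_form:
  assumes "tensor_free t" and E: "finite E" "coordinate_functionals s1 E \<delta>"
    and span: "fst ` supp t \<subseteq> vs1.span E"
  shows "tensor_eq t (\<lambda>x. \<Sum>e\<in>E. tdelta (e, contract t (\<delta> e)) x)"
proof -
  have fin: "finite (supp t)" using assms(1) by (simp add: tensor_free_iff_finite_supp)
  have "(\<Sum>p\<in>supp t. t p * tdelta p x) = t x" for x
    using fin by (auto simp: tdelta_def supp_def if_distrib cong: if_cong)
  then have "tensor_eq t (\<lambda>x. \<Sum>p\<in>supp t. t p * tdelta p x)"
    by (simp add: tensor_eq_refl)
  also have "tensor_eq \<dots> (\<lambda>x. \<Sum>p\<in>supp t. t p * (\<Sum>e\<in>E. tdelta (e, \<delta> e (fst p) *b snd p) x))"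
  proof (intro tensor_eq_sum tensor_eq_mult)
    fix p assume "p \<in> supp t"
    then have "(\<Sum>e\<in>E. \<delta> e (fst p) *a e, snd p) = p"
      using span vs1.coordinate_expansion[OF E] by auto
    then have "tensor_eq (tdelta p) (\<lambda>x. \<Sum>e\<in>E. tdelta (\<delta> e (fst p) *a e, snd p) x)"
      using tdelta_sum_left[of "\<lambda>e. \<delta> e (fst p) *a e" E "snd p"] by simp
    also have "tensor_eq \<dots> (\<lambda>x. \<Sum>e\<in>E. tdelta (e, \<delta> e (fst p) *b snd p) x)"
      by (intro tensor_eq_sum tdelta_scale_left)
    finally show "tensor_eq (tdelta p) \<dots>" .
  qed
  also have "\<dots> = (\<lambda>x. \<Sum>e\<in>E. \<Sum>p\<in>supp t. t p * tdelta (e, \<delta> e (fst p) *b snd p) x)"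
    by (subst sum.swap) (simp add: sum_distrib_left)
  also have "tensor_eq \<dots> (\<lambda>x. \<Sum>e\<in>E. \<Sum>p\<in>supp t. tdelta (e, (t p * \<delta> e (fst p)) *b snd p) x)"
    by (intro tensor_eq_sum) (metis tdelta_scale_right vs2.scale_scale)
  also have "tensor_eq \<dots> (\<lambda>x. \<Sum>e\<in>E. tdelta (e, contract t (\<delta> e)) x)"
    unfolding contract_def by (intro tensor_eq_sum tensor_eq_sym[OF tdelta_sum_right])
  finally show ?thesis .
qed

lemma rel_if_coordinates_eq_0:
  assumes "tensor_free t" and E: "finite E" "coordinate_functionals s1 E \<delta>"
    and span: "fst ` supp t \<subseteq> vs1.span E" and "\<forall>e\<in>E. contract t (\<delta> e) = 0"
  shows "t \<in> R"
proof -
  have "tensor_eq (\<lambda>x. \<Sum>e\<in>E. tdelta (e, contract t (\<delta> e)) x) (\<lambda>_. 0)"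
    using assms(5) by (simp add: tensor_eq_0_iff tensor_rel_sum tdelta_0_right)
  with tensor_normal_form[OF assms(1) E span] show "t \<in> R"
    using tensor_eq_trans tensor_eq_0_iff by blast
qed

lemma rel_iff_contract_eq_0:
  assumes "tensor_free t"
  shows "t \<in> R \<longleftrightarrow> (\<forall>l. Vector_Spaces.linear s1 (*) l \<longrightarrow> contract t l = 0)"
proof (intro iffI allI impI)
  assume contract_0: "\<forall>l. Vector_Spaces.linear s1 (*) l \<longrightarrow> contract t l = 0"
  have "finite (fst ` supp t)"
    using assms by (simp add: tensor_free_iff_finite_supp)
  then obtain E \<delta> where "finite E" and span: "fst ` supp t \<subseteq> vs1.span E"
    and \<delta>: "coordinate_functionals s1 E \<delta>"
    by (rule vs1.coordinate_functionals_exist)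
  moreover have "\<forall>e\<in>E. contract t (\<delta> e) = 0"
    using contract_0 \<delta> by (simp add: coordinate_functionals_def)
  ultimately show "t \<in> R" by (intro rel_if_coordinates_eq_0[OF assms])
qed (rule contract_rel)

end

section \<open>Eigentensors of two irreducible representations\<close>

lemma representation_linear:
  "representation G s \<rho> \<Longrightarrow> g \<in> carrier G \<Longrightarrow> Vector_Spaces.linear s s (\<rho> g)"
  by (simp add: representation_def)

lemma representation_inv_apply:
  assumes "group G" and "representation G s \<rho>" and "g \<in> carrier G"
  shows "\<rho> (inv\<^bsub>G\<^esub> g) (\<rho> g x) = x" and "\<rho> g (\<rho> (inv\<^bsub>G\<^esub> g) x) = x"
proof -
  have inv: "inv\<^bsub>G\<^esub> g \<in> carrier G" by (rule group.inv_closed[OF assms(1,3)])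
  have one: "\<rho> \<one>\<^bsub>G\<^esub> = id"
    and mult: "\<And>h k. h \<in> carrier G \<Longrightarrow> k \<in> carrier G \<Longrightarrow> \<rho> (h \<otimes>\<^bsub>G\<^esub> k) = \<rho> h \<circ> \<rho> k"
    using assms(2) by (simp_all add: representation_def)
  have "\<rho> (inv\<^bsub>G\<^esub> g) \<circ> \<rho> g = id" and "\<rho> g \<circ> \<rho> (inv\<^bsub>G\<^esub> g) = id"
    using mult[OF inv assms(3)] mult[OF assms(3) inv] one
      group.l_inv[OF assms(1,3)] group.r_inv[OF assms(1,3)]
    by simp_all
  then show "\<rho> (inv\<^bsub>G\<^esub> g) (\<rho> g x) = x" and "\<rho> g (\<rho> (inv\<^bsub>G\<^esub> g) x) = x"
    by (simp_all add: fun_eq_iff)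
qed

lemma irreducible_rep_invariant_subspace:
  assumes "irreducible_rep G s \<rho>" and "module.subspace s S"
    and "\<And>g v. g \<in> carrier G \<Longrightarrow> v \<in> S \<Longrightarrow> \<rho> g v \<in> S"
  shows "S = {0} \<or> S = UNIV"
  using assms unfolding irreducible_rep_def by blast

locale tensor_representation = tensor_product s1 s2
  for s1 :: "'a::field \<Rightarrow> 'b::ab_group_add \<Rightarrow> 'b" (infixr \<open>*a\<close> 75)
  and s2 :: "'a \<Rightarrow> 'c::ab_group_add \<Rightarrow> 'c" (infixr \<open>*b\<close> 75) +
  fixes G :: "('g, 'm) monoid_scheme" and \<rho> :: "'g \<Rightarrow> 'b \<Rightarrow> 'b" and \<sigma> :: "'g \<Rightarrow> 'c \<Rightarrow> 'c"
    and chi :: "'g \<Rightarrow> 'a"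
  assumes group: "group G" and rep1: "representation G s1 \<rho>" and rep2: "representation G s2 \<sigma>"
begin

abbreviation act :: "'g \<Rightarrow> ('b \<times> 'c \<Rightarrow> 'a) \<Rightarrow> 'b \<times> 'c \<Rightarrow> 'a" where
  "act \<equiv> tensor_act G \<rho> \<sigma>"

lemma act_apply_image: "g \<in> carrier G \<Longrightarrow> act g t (\<rho> g v, \<sigma> g w) = t (v, w)"
  by (simp add: tensor_act_def representation_inv_apply[OF group rep1]
      representation_inv_apply[OF group rep2])

lemma supp_act:
  assumes g: "g \<in> carrier G"
  shows "supp (act g t) = (\<lambda>p. (\<rho> g (fst p), \<sigma> g (snd p))) ` supp t"
proof
  show "supp (act g t) \<subseteq> (\<lambda>p. (\<rho> g (fst p), \<sigma> g (snd p))) ` supp t"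
  proof
    fix q assume q: "q \<in> supp (act g t)"
    let ?p = "(\<rho> (inv\<^bsub>G\<^esub> g) (fst q), \<sigma> (inv\<^bsub>G\<^esub> g) (snd q))"
    have "?p \<in> supp t" using q by (simp add: supp_def tensor_act_def split_beta)
    moreover have "q = (\<rho> g (fst ?p), \<sigma> g (snd ?p))"
      by (simp add: representation_inv_apply[OF group rep1 g] representation_inv_apply[OF group rep2 g])
    ultimately show "q \<in> (\<lambda>p. (\<rho> g (fst p), \<sigma> g (snd p))) ` supp t" by blast
  qed
  show "(\<lambda>p. (\<rho> g (fst p), \<sigma> g (snd p))) ` supp t \<subseteq> supp (act g t)"
    using act_apply_image[OF g] by (auto simp: supp_def)
qed

lemma tensor_free_act: "g \<in> carrier G \<Longrightarrow> tensor_free t \<Longrightarrow> tensor_free (act g t)"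
  by (simp add: tensor_free_iff_finite_supp supp_act)

lemma contract_act:
  assumes g: "g \<in> carrier G"
  shows "contract (act g t) l = \<sigma> g (contract t (l \<circ> \<rho> g))"
proof -
  let ?h = "\<lambda>p. (\<rho> g (fst p), \<sigma> g (snd p))"
  have "inj ?h"
  proof (rule injI)
    fix p q assume "?h p = ?h q"
    then have "\<rho> (inv\<^bsub>G\<^esub> g) (\<rho> g (fst p)) = \<rho> (inv\<^bsub>G\<^esub> g) (\<rho> g (fst q))"
      and "\<sigma> (inv\<^bsub>G\<^esub> g) (\<sigma> g (snd p)) = \<sigma> (inv\<^bsub>G\<^esub> g) (\<sigma> g (snd q))"
      by auto
    then show "p = q"
      by (simp add: prod_eq_iff representation_inv_apply[OF group rep1 g]
          representation_inv_apply[OF group rep2 g])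
  qed
  then have "contract (act g t) l = (\<Sum>p\<in>supp t. (act g t (?h p) * l (fst (?h p))) *b snd (?h p))"
    unfolding contract_def supp_act[OF g] by (simp add: sum.reindex inj_on_subset)
  also have "\<dots> = (\<Sum>p\<in>supp t. \<sigma> g ((t p * (l \<circ> \<rho> g) (fst p)) *b snd p))"
    by (simp add: act_apply_image[OF g] linear_map_scale[OF representation_linear[OF rep2 g]])
  also have "\<dots> = \<sigma> g (contract t (l \<circ> \<rho> g))"
    by (simp add: contract_def linear_map_sum[OF representation_linear[OF rep2 g]])
  finally show ?thesis .
qed

definition eigentensor :: "('b \<times> 'c \<Rightarrow> 'a) \<Rightarrow> bool" where
  "eigentensor t \<longleftrightarrow> tensor_free t \<and> (\<forall>g\<in>carrier G. (\<lambda>x. act g t x - chi g * t x) \<in> R)"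

lemma eigentensor_lincomb:
  assumes "eigentensor t1" and "eigentensor t2"
  shows "eigentensor (\<lambda>x. a * t1 x + b * t2 x)"
  unfolding eigentensor_def
proof (intro conjI ballI)
  show "tensor_free (\<lambda>x. a * t1 x + b * t2 x)" using assms by (simp add: eigentensor_def)
next
  fix g assume "g \<in> carrier G"
  then have "(\<lambda>x. a * (act g t1 x - chi g * t1 x) + b * (act g t2 x - chi g * t2 x)) \<in> R"
    using assms by (intro tensor_rel.add tensor_rel.smult) (auto simp: eigentensor_def)
  then show "(\<lambda>x. act g (\<lambda>x. a * t1 x + b * t2 x) x - chi g * (a * t1 x + b * t2 x)) \<in> R"
    by (simp add: tensor_act_def split_beta algebra_simps)
qed

lemma contract_eigentensor:
  assumes t: "eigentensor t" and g: "g \<in> carrier G" and l: "Vector_Spaces.linear s1 (*) l"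
  shows "\<sigma> g (contract t (l \<circ> \<rho> g)) = chi g *b contract t l"
proof -
  have free: "tensor_free t" and rel: "(\<lambda>x. act g t x - chi g * t x) \<in> R"
    using t g by (auto simp: eigentensor_def)
  have "0 = contract (\<lambda>x. act g t x - chi g * t x) l"
    using contract_rel[OF rel l] by simp
  also have "\<dots> = contract (act g t) l - chi g *b contract t l"
    by (simp add: contract_diff contract_mult tensor_free_act g free)
  finally show ?thesis by (simp add: contract_act[OF g])
qed

lemma contract_eigentensor_kernel:
  assumes t: "eigentensor t" and g: "g \<in> carrier G" and l: "Vector_Spaces.linear s1 (*) l"
    and "contract t l = 0"
  shows "contract t (l \<circ> \<rho> g) = 0"
proof -
  have "\<sigma> (inv\<^bsub>G\<^esub> g) (\<sigma> g (contract t (l \<circ> \<rho> g))) = 0"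
    using contract_eigentensor[OF t g l] \<open>contract t l = 0\<close>
      linear_map_0[OF representation_linear[OF rep2 group.inv_closed[OF group g]]]
    by simp
  then show ?thesis by (simp add: representation_inv_apply(1)[OF group rep2 g])
qed

lemma contract_eigentensor_surj:
  assumes irr: "irreducible_rep G s2 \<sigma>" and t: "eigentensor t" and "t \<notin> R"
  shows "\<exists>l. Vector_Spaces.linear s1 (*) l \<and> contract t l = y"
proof -
  define I where "I = {contract t l | l. Vector_Spaces.linear s1 (*) l}"
  have "\<sigma> g y \<in> I" if g: "g \<in> carrier G" and "y \<in> I" for g y
  proof -
    obtain l where l: "Vector_Spaces.linear s1 (*) l" and y: "y = contract t l"
      using \<open>y \<in> I\<close> unfolding I_def by blast
    define l' where "l' = l \<circ> \<rho> (inv\<^bsub>G\<^esub> g)"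
    have l': "Vector_Spaces.linear s1 (*) l'"
      unfolding l'_def using representation_linear[OF rep1 group.inv_closed[OF group g]] l
      by (rule Vector_Spaces.linear_compose)
    have "l' \<circ> \<rho> g = l"
      by (simp add: l'_def fun_eq_iff representation_inv_apply(1)[OF group rep1 g])
    then have "\<sigma> g y = contract t (\<lambda>v. chi g * l' v)"
      using contract_eigentensor[OF t g l'] by (simp add: y contract_mult_functional)
    moreover have "Vector_Spaces.linear s1 (*) (\<lambda>v. chi g * l' v)"
      using l' by (simp add: Vector_Spaces.linear_iff algebra_simps)
    ultimately show ?thesis unfolding I_def by blast
  qed
  moreover have "I \<noteq> {0}"
    using \<open>t \<notin> R\<close> rel_iff_contract_eq_0 t by (auto simp: I_def eigentensor_def)
  ultimately have "I = UNIV"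
    using irreducible_rep_invariant_subspace[OF irr contract_image_subspace] unfolding I_def by blast
  then have "y \<in> I" by simp
  then show ?thesis unfolding I_def by blast
qed

lemma eigentensor_kernel_annihilator_trivial:
  assumes irr: "irreducible_rep G s1 \<rho>" and t: "eigentensor t"
    and l0: "Vector_Spaces.linear s1 (*) l0" "contract t l0 = 0" "l0 v0 \<noteq> 0"
    and v: "\<And>l. Vector_Spaces.linear s1 (*) l \<Longrightarrow> contract t l = 0 \<Longrightarrow> l v = 0"
  shows "v = 0"
proof -
  define A where "A = {v. \<forall>l. Vector_Spaces.linear s1 (*) l \<and> contract t l = 0 \<longrightarrow> l v = 0}"
  have "vs1.subspace A"
    unfolding vs1.subspace_def A_def by (auto simp: linear_map_0 linear_map_add linear_map_scale)
  moreover have "\<rho> g v \<in> A" if g: "g \<in> carrier G" and "v \<in> A" for g v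
  proof -
    have "l (\<rho> g v) = 0" if l: "Vector_Spaces.linear s1 (*) l" and "contract t l = 0" for l
    proof -
      have "Vector_Spaces.linear s1 (*) (l \<circ> \<rho> g)"
        using representation_linear[OF rep1 g] l by (rule Vector_Spaces.linear_compose)
      moreover have "contract t (l \<circ> \<rho> g) = 0"
        using contract_eigentensor_kernel[OF t g l \<open>contract t l = 0\<close>] .
      ultimately show ?thesis using \<open>v \<in> A\<close> unfolding A_def by auto
    qed
    then show ?thesis unfolding A_def by blast
  qed
  moreover have "A \<noteq> UNIV" using l0 by (auto simp: A_def)
  ultimately have "A = {0}" using irreducible_rep_invariant_subspace[OF irr] by blast
  moreover have "v \<in> A" using v by (auto simp: A_def)
  ultimately show ?thesis by blast
qed

lemma contract_eigentensor_inj: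
  assumes irr: "irreducible_rep G s1 \<rho>" and t: "eigentensor t"
    and l0: "Vector_Spaces.linear s1 (*) l0" "contract t l0 = 0" "l0 v0 \<noteq> 0"
  shows "t \<in> R"
proof (rule ccontr)
  assume "t \<notin> R"
  have free: "tensor_free t" using t by (simp add: eigentensor_def)
  then have "finite (fst ` supp t)" by (simp add: tensor_free_iff_finite_supp)
  then obtain E \<delta> where E: "finite E" and span: "fst ` supp t \<subseteq> vs1.span E"
    and \<delta>: "coordinate_functionals s1 E \<delta>"
    by (rule vs1.coordinate_functionals_exist)
  note expansion = contract_expansion[OF free E \<delta> span]
  obtain e1 where e1: "e1 \<in> E" "contract t (\<delta> e1) \<noteq> 0"
    using \<open>t \<notin> R\<close> rel_if_coordinates_eq_0[OF free E \<delta> span] by blast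
  then obtain \<mu> where \<mu>: "Vector_Spaces.linear s2 (*) \<mu>" "\<mu> (contract t (\<delta> e1)) = 1"
    using vs2.linear_functional_extend[of "{contract t (\<delta> e1)}" "\<lambda>_. 1"] by auto
  \<comment> \<open>\<open>l v = \<mu> (contract t l)\<close> for every functional \<open>l\<close>, so \<open>v\<close> is killed by the kernel\<close>
  define v where "v = (\<Sum>e\<in>E. \<mu> (contract t (\<delta> e)) *a e)"
  have "v = 0"
  proof (rule eigentensor_kernel_annihilator_trivial[OF irr t l0])
    fix l assume l: "Vector_Spaces.linear s1 (*) l" and "contract t l = 0"
    have "l v = \<mu> (\<Sum>e\<in>E. l e *b contract t (\<delta> e))"
      unfolding v_def
      by (simp add: linear_map_sum[OF l] linear_map_scale[OF l] linear_map_sum[OF \<mu>(1)]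
          linear_map_scale[OF \<mu>(1)] mult.commute)
    also have "\<dots> = 0"
      using \<open>contract t l = 0\<close> by (simp add: expansion[OF l, symmetric] linear_map_0[OF \<mu>(1)])
    finally show "l v = 0" .
  qed
  moreover have "\<delta> e1 v = 1"
    unfolding v_def using vs1.coordinate_functional_lincomb[OF E \<delta> e1(1)] \<mu>(2) by simp
  moreover have "Vector_Spaces.linear s1 (*) (\<delta> e1)"
    using \<delta> e1(1) by (simp add: coordinate_functionals_def)
  ultimately show False using linear_map_0 by fastforce
qed

lemma eigentensors_common_eigenfunctional:
  assumes irr: "irreducible_rep G s2 \<sigma>" and "alg_closed TYPE('a)"
    and t1: "eigentensor t1" and "t1 \<notin> R" and t2: "eigentensor t2"
  obtains c l v where "Vector_Spaces.linear s1 (*) l" and "l v \<noteq> 0"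
    and "contract t2 l = c *b contract t1 l"
proof -
  have free1: "tensor_free t1" and free2: "tensor_free t2"
    using t1 t2 by (simp_all add: eigentensor_def)
  then have "finite (fst ` (supp t1 \<union> supp t2))" by (simp add: tensor_free_iff_finite_supp)
  then obtain E \<delta> where E: "finite E" and span: "fst ` (supp t1 \<union> supp t2) \<subseteq> vs1.span E"
    and \<delta>: "coordinate_functionals s1 E \<delta>"
    by (rule vs1.coordinate_functionals_exist)
  have span1: "fst ` supp t1 \<subseteq> vs1.span E" and span2: "fst ` supp t2 \<subseteq> vs1.span E"
    using span by auto
  note expansion1 = contract_expansion[OF free1 E \<delta> span1]
    and expansion2 = contract_expansion[OF free2 E \<delta> span2]
  have "E \<noteq> {}" using \<open>t1 \<notin> R\<close> rel_if_coordinates_eq_0[OF free1 E \<delta> span1] by auto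
  have "\<forall>e'. \<exists>m. Vector_Spaces.linear s1 (*) m \<and> contract t1 m = contract t2 (\<delta> e')"
    using contract_eigentensor_surj[OF irr t1 \<open>t1 \<notin> R\<close>] by blast
  then obtain m where m: "\<And>e'. Vector_Spaces.linear s1 (*) (m e')"
    and m_eq: "\<And>e'. contract t1 (m e') = contract t2 (\<delta> e')"
    by metis
  have "contract t2 (\<delta> e') = (\<Sum>e\<in>E. m e' e *b contract t1 (\<delta> e))" if "e' \<in> E" for e'
    using expansion1[OF m] m_eq by simp
  then obtain a c where a: "\<exists>e\<in>E. a e \<noteq> 0"
    and eigen: "(\<Sum>e\<in>E. a e *b (contract t2 (\<delta> e) - c *b contract t1 (\<delta> e))) = 0"
    by (rule vs2.alg_closed_eigen_combination[OF assms(2) E \<open>E \<noteq> {}\<close>])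
  define l where "l v = (\<Sum>e\<in>E. a e * \<delta> e v)" for v
  have l: "Vector_Spaces.linear s1 (*) l"
    unfolding l_def using \<delta> by (intro vs1.linear_functional_lincomb) (simp add: coordinate_functionals_def)
  have l_E: "l e = a e" if "e \<in> E" for e
  proof -
    have "l e = (\<Sum>e'\<in>E. if e' = e then a e else 0)"
      unfolding l_def using \<delta> that by (intro sum.cong) (auto simp: coordinate_functionals_def)
    then show ?thesis using E that by simp
  qed
  obtain e0 where "e0 \<in> E" and "l e0 \<noteq> 0" using a l_E by auto
  moreover have "contract t2 l = c *b contract t1 l"
    using eigen
    by (simp add: expansion1[OF l] expansion2[OF l] l_E vs2.scale_right_diff_distrib
        vs2.scale_sum_right sum_subtractf mult.commute cong: sum.cong)
  ultimately show thesis using that l by blast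
qed

lemma eigentensors_dependent:
  assumes irr1: "irreducible_rep G s1 \<rho>" and irr2: "irreducible_rep G s2 \<sigma>"
    and "alg_closed TYPE('a)" and t1: "eigentensor t1" and t2: "eigentensor t2"
  obtains a b where "a \<noteq> 0 \<or> b \<noteq> 0" and "(\<lambda>x. a * t1 x + b * t2 x) \<in> R"
proof (cases "t1 \<in> R")
  case True
  then show thesis using that[of 1 0] by simp
next
  case False
  obtain c l v where l: "Vector_Spaces.linear s1 (*) l" and "l v \<noteq> 0"
    and eigen: "contract t2 l = c *b contract t1 l"
    by (metis eigentensors_common_eigenfunctional[OF irr2 assms(3) t1 False t2])
  have free1: "tensor_free t1" and free2: "tensor_free t2"
    using t1 t2 by (simp_all add: eigentensor_def)
  have "contract (\<lambda>x. - c * t1 x + 1 * t2 x) l = 0"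
    using eigen by (simp add: contract_diff contract_mult free1 free2)
  then have "(\<lambda>x. - c * t1 x + 1 * t2 x) \<in> R"
    by (rule contract_eigentensor_inj[OF irr1 eigentensor_lincomb[OF t1 t2] l _ \<open>l v \<noteq> 0\<close>])
  then show thesis using that[of "- c" 1] by simp
qed

end

theorem mainTheorem14:
  fixes G :: "('g, 'b) monoid_scheme" and T :: "'g topology"
    and sV :: "'k::field \<Rightarrow> 'v::ab_group_add \<Rightarrow> 'v" and \<rho> :: "'g \<Rightarrow> 'v \<Rightarrow> 'v"
    and sW :: "'k \<Rightarrow> 'w::ab_group_add \<Rightarrow> 'w" and \<sigma> :: "'g \<Rightarrow> 'w \<Rightarrow> 'w"
    and chi :: "'g \<Rightarrow> 'k"
  assumes "profinite_group G T"
    and "alg_closed TYPE('k)"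
    and "smooth_rep G T sV \<rho>" and "irreducible_rep G sV \<rho>"
    and "smooth_rep G T sW \<sigma>" and "irreducible_rep G sW \<sigma>"
    and "smooth_rep G T (*) (\<lambda>g c. chi g * c)"
  shows "\<not> double_char_in_tensor G sV \<rho> sW \<sigma> chi"
proof
  assume "double_char_in_tensor G sV \<rho> sW \<sigma> chi"
  then obtain t1 t2 where free: "tensor_free t1" "tensor_free t2"
    and eigen1: "\<forall>g\<in>carrier G. (\<lambda>x. tensor_act G \<rho> \<sigma> g t1 x - chi g * t1 x) \<in> tensor_rel sV sW"
    and eigen2: "\<forall>g\<in>carrier G. (\<lambda>x. tensor_act G \<rho> \<sigma> g t2 x - chi g * t2 x) \<in> tensor_rel sV sW"
    and independent: "\<forall>a b. (\<lambda>x. a * t1 x + b * t2 x) \<in> tensor_rel sV sW \<longrightarrow> a = 0 \<and> b = 0"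
    unfolding double_char_in_tensor_def by (elim exE conjE)
  have "group G"
    using assms(1) by (simp add: profinite_group_def topological_group_on_def)
  moreover have "representation G sV \<rho>" and "representation G sW \<sigma>"
    using assms(4,6) by (simp_all add: irreducible_rep_def)
  ultimately interpret tensor_representation sV sW G \<rho> \<sigma> chi
    by (simp add: tensor_representation_def tensor_product_def tensor_representation_axioms_def
        representation_def)
  have "eigentensor t1" and "eigentensor t2"
    using free eigen1 eigen2 by (simp_all add: eigentensor_def)
  then obtain a b where "a \<noteq> 0 \<or> b \<noteq> 0" and "(\<lambda>x. a * t1 x + b * t2 x) \<in> tensor_rel sV sW"
    by (metis eigentensors_dependent[OF assms(4,6,2)])
  then show False using independent by blast
qed

end
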